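(* Under the hypotheses of the stable-fixed-point theorem (Assumptions (A1), (A2)), let $q^\ast\in\mathbb S^\circ$ satisfy $\nabla\ell(p,q^\ast|x)=\mathbf 1$, and let $$B=-\mathrm{diag}(q^\ast)\,\nabla^2\ell(p,q^\ast|x)=\frac1{2M}\sum_{m=1}^M\sum_{i=1}^I x_{im}\frac{\mathrm{diag}(q^\ast)\,p_{\cdot im}p_{\cdot im}^\top}{\langle q^\ast,p_{\cdot im}\rangle^2}.$$ Then $B$ has nonnegative entries, $\mathbf 1^\top B=\mathbf 1^\top$ (so $B^\top$ is a stochastic matrix), $Bq^\ast=q^\ast$, and all eigenvalues of $B$ are real and lie in $(0,1]$. Consequently the Jacobian $\nabla L(p,q^\ast|x)=E_K-B$ has all eigenvalues in $[0,1)$.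
   Context: $\mathbb S^\circ=\{q\in\mathbb R^K: q_k>0,\ \sum_kq_k=1\}$; $p\in\mathbb S_I^{K\times M}$ (each $p_{k\cdot m}=(p_{kim})_i$ a probability vector), $p_{\cdot im}=(p_{kim})_{k=1}^K$; $x\in\{0,1,2\}^{I\times M}$ with $\sum_ix_{im}=2$; $\mathbf 1=(1,\dots,1)^\top$; $E_K$ the identity matrix. $\ell(p,q|x)=\frac1{2M}\sum_m\big(\log\frac{2!}{\prod_ix_{im}!}+\sum_ix_{im}\log\langle q,p_{\cdot im}\rangle\big)$, with gradient $\nabla\ell(p,q|x)=\frac1{2M}\sum_{m,i}x_{im}\frac{p_{\cdot im}}{\langle q,p_{\cdot im}\rangle}$ and Hessian $\nabla^2\ell(p,q|x)=-\frac1{2M}\sum_{m,i}x_{im}\frac{p_{\cdot im}p_{\cdot im}^\top}{\langle q,p_{\cdot im}\rangle^2}$. $L(p,q|x)=\mathrm{diag}(q)\nabla\ell(p,q|x)$, whose Jacobian is $\mathrm{diag}(\nabla\ell(p,q|x))+\mathrm{diag}(q)\nabla^2\ell(p,q|x)$. Assumption (A1): whenever $x_{im}>0$ there is some $k$ with $p_{kim}>0$. Assumption (A2): for every $s\in\mathbb R^K\setminus\{0\}$ with $\langle s,\mathbf 1\rangle=0$ there exist $i,m$ with $x_{im}>0$ and $\langle s,p_{\cdot im}\rangle\neq0$. *)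

theory Defs
  imports Complex_Main "Jordan_Normal_Form.Char_Poly"
begin

text \<open>Indices: k in {0..<K} (components), i in {0..<I}, m in {0..<M}.
  p k i m stands for p_{kim}, x i m for x_{im}, q k for q_k.\<close>

definition qdot :: "nat \<Rightarrow> (nat \<Rightarrow> real) \<Rightarrow> (nat \<Rightarrow> nat \<Rightarrow> nat \<Rightarrow> real) \<Rightarrow> nat \<Rightarrow> nat \<Rightarrow> real" where
  "qdot K q p i m = (\<Sum>k<K. q k * p k i m)"

definition grad_ell :: "nat \<Rightarrow> nat \<Rightarrow> nat \<Rightarrow> (nat \<Rightarrow> nat \<Rightarrow> nat \<Rightarrow> real) \<Rightarrow> (nat \<Rightarrow> real)
    \<Rightarrow> (nat \<Rightarrow> nat \<Rightarrow> nat) \<Rightarrow> nat \<Rightarrow> real" where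
  "grad_ell K I M p q x k =
     1 / (2 * real M) * (\<Sum>m<M. \<Sum>i<I. real (x i m) * p k i m / qdot K q p i m)"

definition hess_ell :: "nat \<Rightarrow> nat \<Rightarrow> nat \<Rightarrow> (nat \<Rightarrow> nat \<Rightarrow> nat \<Rightarrow> real) \<Rightarrow> (nat \<Rightarrow> real)
    \<Rightarrow> (nat \<Rightarrow> nat \<Rightarrow> nat) \<Rightarrow> nat \<Rightarrow> nat \<Rightarrow> real" where
  "hess_ell K I M p q x k j =
     - (1 / (2 * real M)) * (\<Sum>m<M. \<Sum>i<I. real (x i m) * p k i m * p j i m / (qdot K q p i m)\<^sup>2)"

definition Bmat :: "nat \<Rightarrow> nat \<Rightarrow> nat \<Rightarrow> (nat \<Rightarrow> nat \<Rightarrow> nat \<Rightarrow> real) \<Rightarrow> (nat \<Rightarrow> real)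
    \<Rightarrow> (nat \<Rightarrow> nat \<Rightarrow> nat) \<Rightarrow> real mat" where
  "Bmat K I M p q x = mat K K (\<lambda>(k, j). - (q k * hess_ell K I M p q x k j))"

text \<open>Jacobian of L = diag(q) grad: diag(grad) + diag(q) * Hessian\<close>
definition JacL :: "nat \<Rightarrow> nat \<Rightarrow> nat \<Rightarrow> (nat \<Rightarrow> nat \<Rightarrow> nat \<Rightarrow> real) \<Rightarrow> (nat \<Rightarrow> real)
    \<Rightarrow> (nat \<Rightarrow> nat \<Rightarrow> nat) \<Rightarrow> real mat" where
  "JacL K I M p q x = mat K K (\<lambda>(k, j).
      (if k = j then grad_ell K I M p q x k else 0) + q k * hess_ell K I M p q x k j)"

end

theory Submission
  imports Defs
begin

text \<open>The matrix \<open>B = diag(q) H\<close> with \<open>H = -\<nabla>\<^sup>2\<ell>\<close> is a diagonal scaling of a positive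
  semidefinite Gram matrix \<open>H = \<Sum>\<^sub>t a\<^sub>t u\<^sub>t u\<^sub>t\<^sup>T\<close>. For an eigenpair \<open>Bv = \<mu>v\<close> one gets
  \<open>v\<^sup>*Hv = \<mu> \<Sum>\<^sub>k |v\<^sub>k|\<^sup>2/q\<^sub>k\<close>, so \<open>\<mu>\<close> is real and nonnegative. At a fixed point
  \<open>\<Sum>\<^sub>k q\<^sub>k H\<^sub>k\<^sub>j = \<nabla>\<ell>\<^sub>j = 1\<close>, so \<open>B\<close> is column stochastic, whence \<open>|\<mu>| \<le> 1\<close>, and
  \<open>Bq = q\<close> by the symmetry of \<open>H\<close>. If \<open>\<mu> = 0\<close>, then \<open>Hv = 0\<close> forces \<open>\<langle>u\<^sub>t, v\<rangle> = 0\<close>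
  whenever \<open>a\<^sub>t > 0\<close>, while column stochasticity forces \<open>\<Sum>\<^sub>k v\<^sub>k = 0\<close>; (A2) applied to the
  real and imaginary parts of \<open>v\<close> gives \<open>v = 0\<close>. The Jacobian is \<open>E - B\<close>, whose
  eigenvalues are the numbers \<open>1 - \<mu>\<close>.\<close>

lemma gram_quadratic_form:
  fixes a :: "'t \<Rightarrow> real" and u :: "'t \<Rightarrow> nat \<Rightarrow> real" and v :: "nat \<Rightarrow> complex"
  shows "(\<Sum>k<K. cnj (v k) * (\<Sum>j<K. of_real (\<Sum>t\<in>T. a t * u t k * u t j) * v j))
    = of_real (\<Sum>t\<in>T. a t * (cmod (\<Sum>j<K. of_real (u t j) * v j))\<^sup>2)"
proof -
  have "(\<Sum>k<K. cnj (v k) * (\<Sum>j<K. of_real (\<Sum>t\<in>T. a t * u t k * u t j) * v j))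
      = (\<Sum>t\<in>T. \<Sum>k<K. \<Sum>j<K. of_real (a t) * (cnj (of_real (u t k) * v k) * (of_real (u t j) * v j)))"
    by (simp add: sum_distrib_left sum_distrib_right mult_ac sum.swap[of _ T])
  also have "\<dots> = (\<Sum>t\<in>T. of_real (a t) *
      (\<Sum>k<K. \<Sum>j<K. cnj (of_real (u t k) * v k) * (of_real (u t j) * v j)))"
    by (simp add: sum_distrib_left)
  also have "\<dots> = (\<Sum>t\<in>T. of_real (a t) *
      (cnj (\<Sum>j<K. of_real (u t j) * v j) * (\<Sum>j<K. of_real (u t j) * v j)))"
    by (simp only: cnj_sum sum_product)
  also have "\<dots> = of_real (\<Sum>t\<in>T. a t * (cmod (\<Sum>j<K. of_real (u t j) * v j))\<^sup>2)"
    by (simp only: complex_norm_square mult.commute[of "cnj _"] of_real_sum of_real_mult)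
  finally show ?thesis .
qed

lemma gram_kernel:
  fixes a :: "'t \<Rightarrow> real" and u :: "'t \<Rightarrow> nat \<Rightarrow> real" and v :: "nat \<Rightarrow> complex"
  assumes "finite T" and a_nonneg: "\<And>t. t \<in> T \<Longrightarrow> 0 \<le> a t"
    and H_gram: "\<And>k j. H k j = (\<Sum>t\<in>T. a t * u t k * u t j)"
    and kernel: "\<And>k. k < K \<Longrightarrow> (\<Sum>j<K. of_real (H k j) * v j) = 0"
    and t: "t \<in> T" "0 < a t"
  shows "(\<Sum>j<K. of_real (u t j) * v j) = 0"
proof -
  have "of_real (\<Sum>s\<in>T. a s * (cmod (\<Sum>j<K. of_real (u s j) * v j))\<^sup>2) = (0 :: complex)"
    unfolding gram_quadratic_form[symmetric] H_gram[symmetric] by (simp add: kernel)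
  then have "(\<Sum>s\<in>T. a s * (cmod (\<Sum>j<K. of_real (u s j) * v j))\<^sup>2) = 0"
    by (simp only: of_real_eq_0_iff)
  then have "\<forall>s\<in>T. a s * (cmod (\<Sum>j<K. of_real (u s j) * v j))\<^sup>2 = 0"
    by (subst sum_nonneg_eq_0_iff[OF \<open>finite T\<close>, symmetric]) (simp_all add: a_nonneg)
  then show ?thesis using t by auto
qed

lemma diag_gram_eigenvalue_real_nonneg:
  fixes a :: "'t \<Rightarrow> real" and u :: "'t \<Rightarrow> nat \<Rightarrow> real" and q :: "nat \<Rightarrow> real"
    and v :: "nat \<Rightarrow> complex"
  assumes a_nonneg: "\<And>t. t \<in> T \<Longrightarrow> 0 \<le> a t"
    and H_gram: "\<And>k j. H k j = (\<Sum>t\<in>T. a t * u t k * u t j)"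
    and q_pos: "\<And>k. k < K \<Longrightarrow> 0 < q k"
    and eig: "\<And>k. k < K \<Longrightarrow> (\<Sum>j<K. of_real (q k * H k j) * v j) = \<mu> * v k"
    and nz: "k0 < K" "v k0 \<noteq> 0"
  shows "\<exists>r\<ge>0. \<mu> = of_real r"
proof -
  define Q where "Q = (\<Sum>t\<in>T. a t * (cmod (\<Sum>j<K. of_real (u t j) * v j))\<^sup>2)"
  define S where "S = (\<Sum>k<K. (cmod (v k))\<^sup>2 / q k)"
  have "0 < (cmod (v k0))\<^sup>2 / q k0" using nz q_pos by simp
  also have "\<dots> \<le> S"
    unfolding S_def by (rule member_le_sum) (use nz q_pos in \<open>auto intro: divide_nonneg_pos\<close>)
  finally have S_pos: "0 < S" .
  have Q_nonneg: "0 \<le> Q" unfolding Q_def by (intro sum_nonneg) (simp add: a_nonneg)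
  have H_apply: "(\<Sum>j<K. of_real (H k j) * v j) = \<mu> * v k / of_real (q k)" if "k < K" for k
  proof -
    have "of_real (q k) * (\<Sum>j<K. of_real (H k j) * v j) = \<mu> * v k"
      using eig[OF that] by (simp add: sum_distrib_left mult.assoc)
    then show ?thesis using q_pos[OF that] by (simp add: field_simps)
  qed
  have "of_real Q = (\<Sum>k<K. cnj (v k) * (\<Sum>j<K. of_real (H k j) * v j))"
    unfolding Q_def H_gram by (rule gram_quadratic_form[symmetric])
  also have "\<dots> = (\<Sum>k<K. cnj (v k) * (\<mu> * v k / of_real (q k)))"
    by (rule sum.cong) (simp_all add: H_apply)
  also have "\<dots> = \<mu> * (\<Sum>k<K. cnj (v k) * v k / of_real (q k))"
    by (simp add: sum_distrib_left mult_ac)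
  also have "\<dots> = \<mu> * of_real S"
    unfolding S_def by (simp add: complex_norm_square mult.commute del: of_real_power)
  finally have "\<mu> = of_real (Q / S)" using S_pos by (simp add: field_simps)
  then show ?thesis using Q_nonneg S_pos by (intro exI[of _ "Q / S"]) simp
qed

lemma column_stochastic_eigenvalue_norm_le_one:
  fixes C :: "nat \<Rightarrow> nat \<Rightarrow> real" and v :: "nat \<Rightarrow> complex"
  assumes nonneg: "\<And>k j. k < K \<Longrightarrow> j < K \<Longrightarrow> 0 \<le> C k j"
    and col: "\<And>j. j < K \<Longrightarrow> (\<Sum>k<K. C k j) = 1"
    and eig: "\<And>k. k < K \<Longrightarrow> (\<Sum>j<K. of_real (C k j) * v j) = \<mu> * v k"
    and nz: "k0 < K" "v k0 \<noteq> 0"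
  shows "cmod \<mu> \<le> 1"
proof -
  have "cmod \<mu> * (\<Sum>k<K. cmod (v k)) = (\<Sum>k<K. cmod (\<Sum>j<K. of_real (C k j) * v j))"
    by (simp add: eig sum_distrib_left norm_mult)
  also have "\<dots> \<le> (\<Sum>k<K. \<Sum>j<K. C k j * cmod (v j))"
    by (intro sum_mono order.trans[OF norm_sum]) (simp add: norm_mult nonneg)
  also have "\<dots> = (\<Sum>j<K. cmod (v j))"
    by (subst sum.swap) (simp add: sum_distrib_right[symmetric] col)
  finally have "cmod \<mu> * (\<Sum>k<K. cmod (v k)) \<le> (\<Sum>k<K. cmod (v k))" .
  moreover have "0 < (\<Sum>k<K. cmod (v k))"
    using nz by (intro sum_pos2[of _ k0]) auto
  ultimately show ?thesis by simp
qed

lemma column_stochastic_eigenvector_sum: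
  fixes C :: "nat \<Rightarrow> nat \<Rightarrow> real" and v :: "nat \<Rightarrow> complex"
  assumes col: "\<And>j. j < K \<Longrightarrow> (\<Sum>k<K. C k j) = 1"
    and eig: "\<And>k. k < K \<Longrightarrow> (\<Sum>j<K. of_real (C k j) * v j) = \<mu> * v k"
  shows "\<mu> * (\<Sum>k<K. v k) = (\<Sum>k<K. v k)"
proof -
  have "\<mu> * (\<Sum>k<K. v k) = (\<Sum>k<K. \<Sum>j<K. of_real (C k j) * v j)"
    by (simp add: eig sum_distrib_left)
  also have "\<dots> = (\<Sum>j<K. of_real (\<Sum>k<K. C k j) * v j)"
    by (subst sum.swap) (simp add: sum_distrib_right)
  also have "\<dots> = (\<Sum>k<K. v k)"
    by (simp add: col)
  finally show ?thesis .
qed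

lemma complex_vanishing_if_real_vanishing:
  fixes u :: "'t \<Rightarrow> nat \<Rightarrow> real" and v :: "nat \<Rightarrow> complex"
  assumes real_case: "\<And>(s :: nat \<Rightarrow> real) k. (\<Sum>k<K. s k) = 0 \<Longrightarrow>
      (\<And>t. t \<in> T \<Longrightarrow> (\<Sum>k<K. s k * u t k) = 0) \<Longrightarrow> k < K \<Longrightarrow> s k = 0"
    and sum_zero: "(\<Sum>k<K. v k) = 0"
    and orth: "\<And>t. t \<in> T \<Longrightarrow> (\<Sum>k<K. of_real (u t k) * v k) = 0"
    and "k < K"
  shows "v k = 0"
proof -
  have "Re (v k) = 0"
  proof (rule real_case[of "\<lambda>k. Re (v k)"])
    show "(\<Sum>k<K. Re (v k)) = 0" using arg_cong[OF sum_zero, of Re] by (simp add: Re_sum)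
    show "(\<Sum>k<K. Re (v k) * u t k) = 0" if "t \<in> T" for t
      using arg_cong[OF orth[OF that], of Re] by (simp add: Re_sum mult.commute)
  qed fact
  moreover have "Im (v k) = 0"
  proof (rule real_case[of "\<lambda>k. Im (v k)"])
    show "(\<Sum>k<K. Im (v k)) = 0" using arg_cong[OF sum_zero, of Im] by (simp add: Im_sum)
    show "(\<Sum>k<K. Im (v k) * u t k) = 0" if "t \<in> T" for t
      using arg_cong[OF orth[OF that], of Im] by (simp add: Im_sum mult.commute)
  qed fact
  ultimately show ?thesis by (simp add: complex_eq_iff)
qed

lemma diag_gram_eigenvalue_in_unit_interval:
  fixes a :: "'t \<Rightarrow> real" and u :: "'t \<Rightarrow> nat \<Rightarrow> real" and q :: "nat \<Rightarrow> real"
    and v :: "nat \<Rightarrow> complex"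
  assumes "finite T" and a_nonneg: "\<And>t. t \<in> T \<Longrightarrow> 0 \<le> a t"
    and H_gram: "\<And>k j. H k j = (\<Sum>t\<in>T. a t * u t k * u t j)"
    and H_nonneg: "\<And>k j. k < K \<Longrightarrow> j < K \<Longrightarrow> 0 \<le> H k j"
    and q_pos: "\<And>k. k < K \<Longrightarrow> 0 < q k"
    and col: "\<And>j. j < K \<Longrightarrow> (\<Sum>k<K. q k * H k j) = 1"
    and separating: "\<And>(s :: nat \<Rightarrow> real) k. (\<Sum>k<K. s k) = 0 \<Longrightarrow>
      (\<And>t. t \<in> T \<Longrightarrow> 0 < a t \<Longrightarrow> (\<Sum>k<K. s k * u t k) = 0) \<Longrightarrow> k < K \<Longrightarrow> s k = 0"
    and eig: "\<And>k. k < K \<Longrightarrow> (\<Sum>j<K. of_real (q k * H k j) * v j) = \<mu> * v k"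
    and nz: "k0 < K" "v k0 \<noteq> 0"
  shows "\<exists>r. \<mu> = of_real r \<and> 0 < r \<and> r \<le> 1"
proof -
  obtain r where r: "0 \<le> r" "\<mu> = of_real r"
    using diag_gram_eigenvalue_real_nonneg[OF a_nonneg H_gram q_pos eig nz] by blast
  have "cmod \<mu> \<le> 1"
    by (rule column_stochastic_eigenvalue_norm_le_one[OF _ col eig nz])
      (simp add: H_nonneg q_pos less_imp_le)
  then have "r \<le> 1" using r by simp
  moreover have "r \<noteq> 0"
  proof
    assume "r = 0"
    then have kernel: "(\<Sum>j<K. of_real (H k j) * v j) = 0" if "k < K" for k
      using eig[OF that] q_pos[OF that] r by (simp add: mult.assoc flip: sum_distrib_left)
    have sum_zero: "(\<Sum>k<K. v k) = 0"
      using column_stochastic_eigenvector_sum[OF col eig] r \<open>r = 0\<close> by simp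
    have "v k0 = 0"
    proof (rule complex_vanishing_if_real_vanishing[where T = "{t \<in> T. 0 < a t}"])
      show "(\<Sum>k<K. of_real (u t k) * v k) = 0" if "t \<in> {t \<in> T. 0 < a t}" for t
        using gram_kernel[OF \<open>finite T\<close> a_nonneg H_gram kernel] that by auto
    qed (use separating sum_zero nz in auto)
    with nz show False by simp
  qed
  ultimately show ?thesis using r by auto
qed

lemma eigenvalue_of_real_matE:
  fixes A :: "real mat"
  assumes "A \<in> carrier_mat n n" and "eigenvalue (map_mat complex_of_real A) \<mu>"
  obtains v k0 where "k0 < n" "v k0 \<noteq> 0"
    and "\<And>k. k < n \<Longrightarrow> (\<Sum>j<n. of_real (A $$ (k, j)) * v j) = \<mu> * v k"
proof -
  obtain w where w: "w \<in> carrier_vec n" "w \<noteq> 0\<^sub>v n" "map_mat complex_of_real A *\<^sub>v w = \<mu> \<cdot>\<^sub>v w"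
    using assms unfolding eigenvalue_def eigenvector_def by auto
  obtain k0 where "k0 < n" "w $ k0 \<noteq> 0"
    using w(1,2) by (metis carrier_vecD eq_vecI index_zero_vec)
  moreover have "(\<Sum>j<n. of_real (A $$ (k, j)) * w $ j) = \<mu> * w $ k" if "k < n" for k
    using arg_cong[OF w(3), of "\<lambda>z. z $ k"] assms(1) w(1) that
    by (simp add: scalar_prod_def lessThan_atLeast0)
  ultimately show ?thesis by (rule that)
qed

lemma eigenvalue_one_minus:
  fixes A :: "'a :: comm_ring_1 mat"
  assumes A: "A \<in> carrier_mat n n" and "eigenvalue (1\<^sub>m n - A) \<mu>"
  shows "eigenvalue A (1 - \<mu>)"
proof -
  obtain v where v: "v \<in> carrier_vec n" "v \<noteq> 0\<^sub>v n" "(1\<^sub>m n - A) *\<^sub>v v = \<mu> \<cdot>\<^sub>v v"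
    using assms unfolding eigenvalue_def eigenvector_def by auto
  have "A *\<^sub>v v = (1 - \<mu>) \<cdot>\<^sub>v v"
  proof (rule eq_vecI)
    fix i assume "i < dim_vec ((1 - \<mu>) \<cdot>\<^sub>v v)"
    then have i: "i < n" using v(1) by simp
    have "(1\<^sub>m n - A) *\<^sub>v v = v - A *\<^sub>v v"
      using minus_mult_distrib_mat_vec[OF one_carrier_mat A v(1)] v(1) by simp
    then have "v $ i - (A *\<^sub>v v) $ i = \<mu> * v $ i"
      using arg_cong[OF v(3), of "\<lambda>z. z $ i"] A v(1) i by simp
    then show "(A *\<^sub>v v) $ i = ((1 - \<mu>) \<cdot>\<^sub>v v) $ i"
      using i v(1) by (simp add: algebra_simps)
  qed (use A v(1) in simp)
  then show ?thesis using A v unfolding eigenvalue_def eigenvector_def by auto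
qed

lemma eigenvalue_of_real_one_minus:
  fixes A :: "real mat"
  assumes A: "A \<in> carrier_mat n n" and "eigenvalue (map_mat complex_of_real (1\<^sub>m n - A)) \<mu>"
  shows "eigenvalue (map_mat complex_of_real A) (1 - \<mu>)"
proof -
  have "map_mat complex_of_real (1\<^sub>m n - A) = 1\<^sub>m n - map_mat complex_of_real A"
    using A by (intro eq_matI) auto
  then show ?thesis using eigenvalue_one_minus[of "map_mat complex_of_real A" n] A assms(2) by simp
qed

lemma qdot_pos:
  assumes p_nonneg: "\<forall>k<K. 0 \<le> p k i m" and q_pos: "\<forall>k<K. 0 < q k"
    and "k < K" "0 < p k i m"
  shows "0 < qdot K q p i m"
proof -
  have "0 < q k * p k i m" using assms by simp
  also have "\<dots> \<le> qdot K q p i m"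
    unfolding qdot_def by (rule member_le_sum) (use assms in \<open>auto intro: less_imp_le\<close>)
  finally show ?thesis .
qed

lemma hess_ell_commute: "hess_ell K I M p q x k j = hess_ell K I M p q x j k"
  unfolding hess_ell_def by (simp add: mult_ac)

lemma sum_q_hess_ell: "(\<Sum>k<K. q k * hess_ell K I M p q x k j) = - grad_ell K I M p q x j"
proof -
  \<comment> \<open>also when the inner product vanishes: then both sides are 0\<close>
  have qdot_cancel: "(\<Sum>k<K. q k * (real (x i m) * p k i m * p j i m / (qdot K q p i m)\<^sup>2))
      = real (x i m) * p j i m / qdot K q p i m" for i m
  proof -
    have "(\<Sum>k<K. q k * (real (x i m) * p k i m * p j i m / (qdot K q p i m)\<^sup>2))
        = real (x i m) * p j i m / (qdot K q p i m)\<^sup>2 * qdot K q p i m"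
      unfolding qdot_def by (simp add: sum_distrib_left sum_distrib_right sum_divide_distrib mult_ac)
    then show ?thesis by (simp add: power2_eq_square)
  qed
  have "(\<Sum>k<K. q k * hess_ell K I M p q x k j) = - (1 / (2 * real M) *
      (\<Sum>m<M. \<Sum>i<I. \<Sum>k<K. q k * (real (x i m) * p k i m * p j i m / (qdot K q p i m)\<^sup>2)))"
    unfolding hess_ell_def
    by (simp add: sum_distrib_left sum.swap[of _ "{..<K}"] mult.left_commute sum_negf)
  also have "\<dots> = - grad_ell K I M p q x j"
    unfolding grad_ell_def qdot_cancel ..
  finally show ?thesis .
qed

lemma neg_hess_ell_gram:
  "- hess_ell K I M p q x k j = (\<Sum>t\<in>{..<M} \<times> {..<I}.
      real (x (snd t) (fst t)) / (2 * real M * (qdot K q p (snd t) (fst t))\<^sup>2)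
      * p k (snd t) (fst t) * p j (snd t) (fst t))"
  unfolding hess_ell_def sum.cartesian_product'
  by (simp add: sum_distrib_left sum_negf)

lemma Bmat_carrier: "Bmat K I M p q x \<in> carrier_mat K K"
  by (simp add: Bmat_def)

lemma Bmat_index:
  "k < K \<Longrightarrow> j < K \<Longrightarrow> Bmat K I M p q x $$ (k, j) = q k * - hess_ell K I M p q x k j"
  by (simp add: Bmat_def)

lemma sum_Bmat_column: "j < K \<Longrightarrow> (\<Sum>k<K. Bmat K I M p q x $$ (k, j)) = grad_ell K I M p q x j"
  by (simp add: Bmat_index sum_negf sum_q_hess_ell)

lemma Bmat_mult_vec:
  "Bmat K I M p q x *\<^sub>v vec K q = vec K (\<lambda>k. q k * grad_ell K I M p q x k)"
proof (rule eq_vecI)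
  fix k assume "k < dim_vec (vec K (\<lambda>k. q k * grad_ell K I M p q x k))"
  then have k: "k < K" by simp
  have "(Bmat K I M p q x *\<^sub>v vec K q) $ k = q k * - (\<Sum>j<K. q j * hess_ell K I M p q x j k)"
    using k by (simp add: Bmat_def scalar_prod_def lessThan_atLeast0 sum_distrib_left
        hess_ell_commute[of K I M p q x k] mult_ac sum_negf)
  then show "(Bmat K I M p q x *\<^sub>v vec K q) $ k = vec K (\<lambda>k. q k * grad_ell K I M p q x k) $ k"
    using k by (simp add: sum_q_hess_ell)
qed (simp add: Bmat_def)

lemma Bmat_nonneg:
  assumes p_nonneg: "\<forall>k<K. \<forall>i<I. \<forall>m<M. 0 \<le> p k i m" and q_pos: "\<forall>k<K. q k > 0"
    and "k < K" "j < K"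
  shows "0 \<le> Bmat K I M p q x $$ (k, j)"
proof -
  have "0 \<le> - hess_ell K I M p q x k j"
    unfolding neg_hess_ell_gram using p_nonneg assms(3,4) by (intro sum_nonneg) auto
  then show ?thesis using q_pos assms(3,4) by (simp add: Bmat_index mult_nonneg_nonpos less_imp_le)
qed

lemma JacL_eq_one_minus_Bmat:
  assumes "\<forall>k<K. grad_ell K I M p q x k = 1"
  shows "JacL K I M p q x = 1\<^sub>m K - Bmat K I M p q x"
  by (rule eq_matI) (auto simp: JacL_def Bmat_def assms)

lemma Bmat_eigenvalue_in_unit_interval:
  assumes p_nonneg: "\<forall>k<K. \<forall>i<I. \<forall>m<M. 0 \<le> p k i m"
    and A1: "\<forall>i<I. \<forall>m<M. x i m > 0 \<longrightarrow> (\<exists>k<K. p k i m > 0)"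
    and A2: "\<forall>s :: nat \<Rightarrow> real. (\<exists>k<K. s k \<noteq> 0) \<and> (\<Sum>k<K. s k) = 0 \<longrightarrow>
               (\<exists>i<I. \<exists>m<M. x i m > 0 \<and> (\<Sum>k<K. s k * p k i m) \<noteq> 0)"
    and q_pos: "\<forall>k<K. q k > 0"
    and fixpt: "\<forall>k<K. grad_ell K I M p q x k = 1"
    and "eigenvalue (map_mat complex_of_real (Bmat K I M p q x)) \<mu>"
  shows "\<exists>r. \<mu> = complex_of_real r \<and> 0 < r \<and> r \<le> 1"
proof -
  define T where "T = {..<M} \<times> {..<I}"
  define a where "a t = real (x (snd t) (fst t)) / (2 * real M * (qdot K q p (snd t) (fst t))\<^sup>2)"
    for t
  define u where "u t k = p k (snd t) (fst t)" for t k
  define H where "H k j = - hess_ell K I M p q x k j" for k j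
  have H_gram: "H k j = (\<Sum>t\<in>T. a t * u t k * u t j)" for k j
    unfolding H_def T_def a_def u_def by (rule neg_hess_ell_gram)
  have a_nonneg: "0 \<le> a t" for t
    by (simp add: a_def)
  have a_pos: "0 < a (m, i)" if im: "i < I" "m < M" "0 < x i m" for i m
  proof -
    obtain k where "k < K" "0 < p k i m" using A1 im by blast
    then have "0 < qdot K q p i m" using qdot_pos[of K p i m q k] p_nonneg q_pos im by simp
    moreover have "0 < real M" using im by simp
    ultimately show ?thesis using im by (simp add: a_def)
  qed
  obtain v k0 where v: "k0 < K" "v k0 \<noteq> 0"
    "\<And>k. k < K \<Longrightarrow> (\<Sum>j<K. of_real (Bmat K I M p q x $$ (k, j)) * v j) = \<mu> * v k"
    using eigenvalue_of_real_matE[OF Bmat_carrier assms(6)] by blast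
  have eig: "(\<Sum>j<K. of_real (q k * H k j) * v j) = \<mu> * v k" if "k < K" for k
  proof -
    have "(\<Sum>j<K. of_real (q k * H k j) * v j) = (\<Sum>j<K. of_real (Bmat K I M p q x $$ (k, j)) * v j)"
      by (rule sum.cong) (simp_all add: Bmat_index H_def that)
    then show ?thesis using v(3)[OF that] by simp
  qed
  show ?thesis
  proof (rule diag_gram_eigenvalue_in_unit_interval[OF _ a_nonneg H_gram _ _ _ _ eig v(1,2)])
    show "0 \<le> H k j" if "k < K" "j < K" for k j
      unfolding H_gram using p_nonneg that by (intro sum_nonneg) (auto simp: a_nonneg u_def T_def)
    show "(\<Sum>k<K. q k * H k j) = 1" if "j < K" for j
      using fixpt that by (simp add: H_def sum_negf sum_q_hess_ell)
    show "s k = 0" if sum_zero: "(\<Sum>k<K. s k) = 0"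
      and orth: "\<And>t. t \<in> T \<Longrightarrow> 0 < a t \<Longrightarrow> (\<Sum>k<K. s k * u t k) = 0"
      and "k < K" for s k
    proof (rule ccontr)
      assume "s k \<noteq> 0"
      then obtain i m where im: "i < I" "m < M" "0 < x i m" "(\<Sum>k<K. s k * p k i m) \<noteq> 0"
        using A2 sum_zero \<open>k < K\<close> by blast
      moreover have "(\<Sum>k<K. s k * u (m, i) k) = 0"
        using orth a_pos im by (simp add: T_def)
      ultimately show False by (simp add: u_def)
    qed
  qed (use q_pos in \<open>auto simp: T_def\<close>)
qed

theorem mainTheorem5:
  fixes K I M :: nat
    and p :: "nat \<Rightarrow> nat \<Rightarrow> nat \<Rightarrow> real"
    and x :: "nat \<Rightarrow> nat \<Rightarrow> nat"
    and q :: "nat \<Rightarrow> real"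
  assumes p_nonneg: "\<forall>k<K. \<forall>i<I. \<forall>m<M. 0 \<le> p k i m"
    and p_sum: "\<forall>k<K. \<forall>m<M. (\<Sum>i<I. p k i m) = 1"
    and x_range: "\<forall>i<I. \<forall>m<M. x i m \<le> 2"
    and x_sum: "\<forall>m<M. (\<Sum>i<I. x i m) = 2"
    and A1: "\<forall>i<I. \<forall>m<M. x i m > 0 \<longrightarrow> (\<exists>k<K. p k i m > 0)"
    and A2: "\<forall>s :: nat \<Rightarrow> real. (\<exists>k<K. s k \<noteq> 0) \<and> (\<Sum>k<K. s k) = 0 \<longrightarrow>
               (\<exists>i<I. \<exists>m<M. x i m > 0 \<and> (\<Sum>k<K. s k * p k i m) \<noteq> 0)"
    and q_pos: "\<forall>k<K. q k > 0"
    and q_sum: "(\<Sum>k<K. q k) = 1"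
    and fixpt: "\<forall>k<K. grad_ell K I M p q x k = 1"
  shows "(\<forall>k<K. \<forall>j<K. Bmat K I M p q x $$ (k, j) \<ge> 0)
    \<and> (\<forall>j<K. (\<Sum>k<K. Bmat K I M p q x $$ (k, j)) = 1)
    \<and> Bmat K I M p q x *\<^sub>v vec K q = vec K q
    \<and> (\<forall>\<mu>. eigenvalue (map_mat complex_of_real (Bmat K I M p q x)) \<mu> \<longrightarrow>
           (\<exists>r. \<mu> = complex_of_real r \<and> 0 < r \<and> r \<le> 1))
    \<and> JacL K I M p q x = 1\<^sub>m K - Bmat K I M p q x
    \<and> (\<forall>\<mu>. eigenvalue (map_mat complex_of_real (JacL K I M p q x)) \<mu> \<longrightarrow>
           (\<exists>r. \<mu> = complex_of_real r \<and> 0 \<le> r \<and> r < 1))"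
proof -
  let ?B = "Bmat K I M p q x"
  have B_spectrum: "\<exists>r. \<mu> = complex_of_real r \<and> 0 < r \<and> r \<le> 1"
    if "eigenvalue (map_mat complex_of_real ?B) \<mu>" for \<mu>
    by (rule Bmat_eigenvalue_in_unit_interval[OF p_nonneg A1 A2 q_pos fixpt that])
  have J_eq: "JacL K I M p q x = 1\<^sub>m K - ?B"
    by (rule JacL_eq_one_minus_Bmat[OF fixpt])
  have J_spectrum: "\<exists>r. \<mu> = complex_of_real r \<and> 0 \<le> r \<and> r < 1"
    if J_eig: "eigenvalue (map_mat complex_of_real (JacL K I M p q x)) \<mu>" for \<mu>
  proof -
    obtain r where "1 - \<mu> = complex_of_real r" "0 < r" "r \<le> 1"
      using B_spectrum eigenvalue_of_real_one_minus[OF Bmat_carrier J_eig[unfolded J_eq]] by blast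
    then show ?thesis by (intro exI[of _ "1 - r"]) (auto simp: algebra_simps)
  qed
  have Bq: "?B *\<^sub>v vec K q = vec K q"
    unfolding Bmat_mult_vec using fixpt by (intro eq_vecI) auto
  show ?thesis
    using Bmat_nonneg[OF p_nonneg q_pos] sum_Bmat_column fixpt Bq B_spectrum J_eq J_spectrum
    by simp
qed

end
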